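(* Let $f:\mathbb{R}^d\to\mathbb{R}$ be differentiable and $M$-smooth ($M\ge 0$ a scalar), and let $\bar z$ be a stationary point of $f$ ($\nabla f(\bar z)=0$). Let $s$ be standardized on $\mathbb{R}^d$ with $\mathbb{E}[\mathsf{u}_i^4]=\kappa<\infty$, and for $w=(m,C)$ let $\mathsf{g}=\nabla_w f(T_w(\mathsf{u}))$ with $\mathsf{u}\sim s$. Then \[ \mathbb{E}\|\mathsf{g}\|_2^2\le M^2\Big((d+1)\|m-\bar z\|_2^2+(d+\kappa)\|C\|_F^2\Big). \] Moreover, the bound is unimprovable: for every $M\ge0$ and every $\bar z\in\mathbb{R}^d$, the function $f(z)=\frac{M}{2}\|z-\bar z\|_2^2$ satisfies the hypotheses and attains equality for every $w=(m,C)$.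
   Context: $f$ is $M$-smooth if $\|\nabla f(y)-\nabla f(z)\|_2\le M\|y-z\|_2$ for all $y,z\in\mathbb{R}^d$. $T_w(u)=Cu+m$ for $w=(m,C)$, $m\in\mathbb{R}^d$, $C\in\mathbb{R}^{d\times d}$, with $w$ regarded as the vector of all $d+d^2$ entries; $\nabla_w$ is the gradient with respect to all these entries and $\|\cdot\|_2$ on it is the Euclidean norm over all entries. A distribution $s$ on $\mathbb{R}^d$ is standardized if for $\mathsf{u}\sim s$ the components are i.i.d. with $\mathbb{E}\mathsf{u}_1=\mathbb{E}\mathsf{u}_1^3=0$ and $\mathrm{Var}(\mathsf{u}_1)=1$. $\|\cdot\|_F$ is the Frobenius norm. *)

theory Defs
  imports "HOL-Analysis.Analysis" "HOL-Probability.Probability"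
begin

definition grad :: "('a::real_inner \<Rightarrow> real) \<Rightarrow> 'a \<Rightarrow> 'a" where
  "grad f x = (THE D. GDERIV f x :> D)"

definition smooth :: "real \<Rightarrow> ('a::real_inner \<Rightarrow> real) \<Rightarrow> bool" where
  "smooth M f \<longleftrightarrow> (\<forall>y z. norm (grad f y - grad f z) \<le> M * norm (y - z))"

text \<open>Affine map T_w(u) = C u + m, with w = (m, C). The parameter w lives in
  the product space real^'n \<times> real^'n^'n, whose norm is the Euclidean norm over
  all d + d^2 entries.\<close>
definition T :: "(real^'n) \<times> (real^'n^'n) \<Rightarrow> real^'n \<Rightarrow> real^'n" where
  "T w u = snd w *v u + fst w"

definition standardized_kappa :: "(real^'n) measure \<Rightarrow> real \<Rightarrow> bool" where
  "standardized_kappa s \<kappa> \<longleftrightarrow>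
     prob_space s \<and> sets s = sets borel \<and>
     prob_space.indep_vars s (\<lambda>_. borel) (\<lambda>i u. u $ i) UNIV \<and>
     (\<forall>i j. distr s borel (\<lambda>u. u $ i) = distr s borel (\<lambda>u. u $ j)) \<and>
     (\<forall>i. integrable s (\<lambda>u. (u $ i) ^ 4)) \<and>
     (\<forall>i. prob_space.expectation s (\<lambda>u. u $ i) = 0) \<and>
     (\<forall>i. prob_space.expectation s (\<lambda>u. (u $ i) ^ 3) = 0) \<and>
     (\<forall>i. prob_space.variance s (\<lambda>u. u $ i) = 1) \<and>
     (\<forall>i. prob_space.expectation s (\<lambda>u. (u $ i) ^ 4) = \<kappa>)"

end

theory Submission
  imports Defs
begin

text \<open>By the chain rule, \<open>\<nabla>\<^sub>w f (T\<^sub>w u) = (\<nabla>f (T\<^sub>w u), \<nabla>f (T\<^sub>w u) u\<^sup>T)\<close>, whose squared norm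
  is \<open>\<parallel>\<nabla>f (T\<^sub>w u)\<parallel>\<^sup>2 (1 + \<parallel>u\<parallel>\<^sup>2)\<close>. Smoothness and stationarity of \<open>z\<^sub>0\<close> bound
  \<open>\<parallel>\<nabla>f (T\<^sub>w u)\<parallel>\<close> by \<open>M \<parallel>C u + m - z\<^sub>0\<parallel>\<close>, with equality for \<open>f z = M/2 \<parallel>z - z\<^sub>0\<parallel>\<^sup>2\<close>.
  What remains is the fourth-moment identity
  \<open>\<EE> \<parallel>C u + a\<parallel>\<^sup>2 (1 + \<parallel>u\<parallel>\<^sup>2) = (d + 1) \<parallel>a\<parallel>\<^sup>2 + (d + \<kappa>) \<parallel>C\<parallel>\<^sub>F\<^sup>2\<close>, proved row by row:
  independence factorises every mixed moment of degree at most four, and only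
  \<open>\<EE> u\<^sub>i\<^sup>2 = 1\<close> and \<open>\<EE> u\<^sub>i\<^sup>4 = \<kappa>\<close> survive.\<close>

lemma gderiv_unique:
  fixes f :: "'a::real_inner \<Rightarrow> real"
  assumes "GDERIV f x :> D1" "GDERIV f x :> D2"
  shows "D1 = D2"
proof -
  have "(\<lambda>h. inner h D1) = (\<lambda>h. inner h D2)"
    using has_derivative_unique assms unfolding gderiv_def by blast
  then have "inner (D1 - D2) D1 = inner (D1 - D2) D2" by metis
  then have "inner (D1 - D2) (D1 - D2) = 0" by (simp add: inner_diff_right)
  then show ?thesis by simp
qed

lemma grad_eqI:
  fixes f :: "'a::real_inner \<Rightarrow> real"
  assumes "GDERIV f x :> D"
  shows "grad f x = D"
  unfolding grad_def using assms gderiv_unique by blast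

lemma has_gderiv_grad:
  fixes f :: "'a::euclidean_space \<Rightarrow> real"
  assumes "f differentiable (at x)"
  shows "GDERIV f x :> grad f x"
proof -
  obtain D where D: "(f has_derivative D) (at x)"
    using assms unfolding differentiable_def by blast
  have lin: "linear D" using D has_derivative_linear by blast
  define g where "g = (\<Sum>b\<in>Basis. D b *\<^sub>R b)"
  have "D h = inner h g" for h
  proof -
    have "D h = D (\<Sum>b\<in>Basis. (h \<bullet> b) *\<^sub>R b)" by (simp add: euclidean_representation)
    also have "\<dots> = (\<Sum>b\<in>Basis. (h \<bullet> b) * D b)"
      using lin by (simp add: linear_sum linear_scale)
    also have "\<dots> = inner h g" unfolding g_def by (simp add: inner_sum_right mult.commute)
    finally show ?thesis .
  qed
  then have "GDERIV f x :> g"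
    unfolding gderiv_def using D by (metis (no_types, lifting) ext)
  then show ?thesis using grad_eqI by metis
qed

lemma norm_grad_le_of_stationary:
  assumes "smooth M f" "grad f z0 = 0"
  shows "norm (grad f z) \<le> M * norm (z - z0)"
  using assms unfolding smooth_def by (metis diff_zero)

definition outer_product :: "real^'n \<Rightarrow> real^'m \<Rightarrow> real^'m^'n" where
  "outer_product g u = (\<chi> i j. g $ i * u $ j)"

lemma inner_outer_product: "inner A (outer_product g u) = inner (A *v u) g"
  by (simp add: inner_vec_def outer_product_def matrix_vector_mult_def sum_distrib_left mult_ac)

lemma norm_outer_product_sq: "(norm (outer_product g u))\<^sup>2 = (norm g)\<^sup>2 * (norm u)\<^sup>2"
proof -
  have "outer_product g u $ i = g $ i *\<^sub>R u" for i
    by (simp add: outer_product_def vec_eq_iff)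
  then have "inner (outer_product g u) (outer_product g u) = (\<Sum>i\<in>UNIV. g $ i * g $ i * inner u u)"
    by (simp add: inner_vec_def[of "outer_product g u"] mult.assoc)
  also have "\<dots> = inner g g * inner u u"
    by (simp add: inner_vec_def[of g] sum_distrib_right)
  finally show ?thesis by (simp add: power2_norm_eq_inner)
qed

lemma grad_comp_T:
  fixes f :: "real^'n \<Rightarrow> real"
  assumes "f differentiable (at (T w u))"
  shows "grad (\<lambda>w. f (T w u)) w = (grad f (T w u), outer_product (grad f (T w u)) u)"
proof (rule grad_eqI)
  let ?g = "grad f (T w u)"
  have "linear (\<lambda>h::(real^'n)\<times>(real^'n^'n). snd h *v u + fst h)"
    by (rule linearI) (auto simp: matrix_vector_mult_add_rdistrib algebra_simps
       matrix_vector_mult_def vec_eq_iff sum_distrib_left sum.distrib)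
  then have "((\<lambda>h::(real^'n)\<times>(real^'n^'n). snd h *v u + fst h)
      has_derivative (\<lambda>h. snd h *v u + fst h)) (at w)"
    by (simp add: linear_conv_bounded_linear bounded_linear_imp_has_derivative)
  moreover have "(f has_derivative (\<lambda>h. inner h ?g)) (at (T w u))"
    using has_gderiv_grad[OF assms] unfolding gderiv_def .
  ultimately have "((\<lambda>w. f (T w u)) has_derivative (\<lambda>h. inner (snd h *v u + fst h) ?g)) (at w)"
    unfolding T_def by (rule has_derivative_compose)
  moreover have "inner (snd h *v u + fst h) ?g = inner h (?g, outer_product ?g u)" for h
    by (cases h) (simp add: inner_add_left inner_outer_product)
  ultimately show "GDERIV (\<lambda>w. f (T w u)) w :> (?g, outer_product ?g u)"
    unfolding gderiv_def by simp
qed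

lemma norm_grad_comp_T_sq:
  fixes f :: "real^'n \<Rightarrow> real"
  assumes "f differentiable (at (T w u))"
  shows "(norm (grad (\<lambda>w. f (T w u)) w))\<^sup>2 = (norm (grad f (T w u)))\<^sup>2 * (1 + (norm u)\<^sup>2)"
  unfolding grad_comp_T[OF assms] norm_Pair
  by (simp add: norm_outer_product_sq algebra_simps)

lemma norm_grad_comp_T_sq_le:
  fixes f :: "real^'n \<Rightarrow> real"
  assumes "f differentiable (at (T (m, C) u))" "smooth M f" "grad f z0 = 0" "M \<ge> 0"
  shows "(norm (grad (\<lambda>w. f (T w u)) (m, C)))\<^sup>2
    \<le> M\<^sup>2 * ((norm (C *v u + (m - z0)))\<^sup>2 * (1 + (norm u)\<^sup>2))"
proof -
  have "norm (grad f (T (m, C) u)) \<le> M * norm (C *v u + (m - z0))"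
    using norm_grad_le_of_stationary[OF assms(2,3)] by (simp add: T_def algebra_simps)
  then have "(norm (grad f (T (m, C) u)))\<^sup>2 \<le> M\<^sup>2 * (norm (C *v u + (m - z0)))\<^sup>2"
    by (metis norm_ge_zero power_mono power_mult_distrib)
  then show ?thesis
    unfolding norm_grad_comp_T_sq[OF assms(1)] mult.assoc[symmetric]
    by (rule mult_right_mono) simp
qed

lemma gderiv_half_sq_dist:
  fixes z z0 :: "'a::real_inner"
  shows "GDERIV (\<lambda>z. M / 2 * (norm (z - z0))\<^sup>2) z :> M *\<^sub>R (z - z0)"
  unfolding gderiv_def power2_norm_eq_inner
  by (auto intro!: derivative_eq_intros simp: inner_commute algebra_simps inner_diff_right inner_diff_left)

lemma grad_half_sq_dist:
  fixes z z0 :: "'a::real_inner"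
  shows "grad (\<lambda>z. M / 2 * (norm (z - z0))\<^sup>2) z = M *\<^sub>R (z - z0)"
  by (rule grad_eqI) (rule gderiv_half_sq_dist)

lemma differentiable_half_sq_dist:
  fixes z z0 :: "'a::real_inner"
  shows "(\<lambda>z. M / 2 * (norm (z - z0))\<^sup>2) differentiable (at z)"
  using gderiv_half_sq_dist unfolding gderiv_def by (rule differentiableI)

lemma smooth_half_sq_dist:
  fixes z0 :: "'a::real_inner"
  assumes "M \<ge> 0"
  shows "smooth M (\<lambda>z. M / 2 * (norm (z - z0))\<^sup>2)"
  unfolding smooth_def grad_half_sq_dist using assms by (simp add: scaleR_diff_right[symmetric])

lemma norm_grad_comp_T_half_sq_dist:
  fixes z0 :: "real^'n"
  assumes "M \<ge> 0"
  shows "(norm (grad (\<lambda>w. M / 2 * (norm (T w u - z0))\<^sup>2) (m, C)))\<^sup>2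
    = M\<^sup>2 * ((norm (C *v u + (m - z0)))\<^sup>2 * (1 + (norm u)\<^sup>2))"
  using assms
  unfolding norm_grad_comp_T_sq[OF differentiable_half_sq_dist] grad_half_sq_dist
  by (simp add: T_def power_mult_distrib add_diff_eq)

lemma abs_power_le_one_plus_power4:
  fixes x :: real
  assumes "k \<le> 4"
  shows "\<bar>x\<bar> ^ k \<le> 1 + x ^ 4"
proof (cases "\<bar>x\<bar> \<le> 1")
  case True
  then have "\<bar>x\<bar> ^ k \<le> 1" by (simp add: power_le_one)
  then show ?thesis by (simp add: zero_le_even_power add_increasing2)
next
  case False
  then have "\<bar>x\<bar> ^ k \<le> \<bar>x\<bar> ^ 4" using assms by (intro power_increasing) auto
  then show ?thesis by (simp add: power_abs)
qed

lemma prod_power_if_eq: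
  fixes x :: "'i::finite \<Rightarrow> 'a::comm_monoid_mult"
  shows "(\<Prod>i\<in>UNIV. x i ^ (if i = j then a else 0)) = x j ^ a"
  by (simp add: if_distrib[of "power _"] prod.delta cong: if_cong)

lemma power2_norm_vec_eq_sum: "(norm x)\<^sup>2 = (\<Sum>i\<in>UNIV. (norm (x $ i))\<^sup>2)"
  for x :: "'a::real_inner^'n"
  by (simp add: power2_norm_eq_inner inner_vec_def)

lemma power2_norm_real_vec_eq_sum: "(norm u)\<^sup>2 = (\<Sum>k\<in>UNIV. (u $ k)\<^sup>2)"
  for u :: "real^'n"
  by (simp add: power2_norm_vec_eq_sum)

lemma power2_inner_vec_eq_sum: "(inner v u)\<^sup>2 = (\<Sum>j\<in>UNIV. \<Sum>l\<in>UNIV. v $ j * v $ l * (u $ j * u $ l))"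
  for u v :: "real^'n"
  by (simp add: inner_vec_def power2_eq_square sum_product mult_ac)

text \<open>The moments \<open>\<EE> u\<^sub>i\<^sup>n\<close> of a standardized coordinate; the values for \<open>n > 4\<close> are junk.\<close>
definition coord_moment :: "real \<Rightarrow> nat \<Rightarrow> real" where
  "coord_moment \<kappa> n = (if n = 0 \<or> n = 2 then 1 else if n = 4 then \<kappa> else 0)"

context
  fixes s :: "(real^'n) measure" and \<kappa> :: real
  assumes std: "standardized_kappa s \<kappa>"
begin

interpretation prob_space s
  using std unfolding standardized_kappa_def by blast

lemma borel_measurable_continuous_standardized:
  "continuous_on UNIV g \<Longrightarrow> (g :: real^'n \<Rightarrow> real) \<in> borel_measurable s"
  using std measurable_cong_sets borel_measurable_continuous_onI
  unfolding standardized_kappa_def by blast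

lemma integrable_coord_power: "k \<le> 4 \<Longrightarrow> integrable s (\<lambda>u. (u $ i) ^ k)"
proof -
  assume k: "k \<le> 4"
  have "integrable s (\<lambda>u. 1 + (u $ i) ^ 4)"
    using std unfolding standardized_kappa_def by auto
  moreover have "(\<lambda>u. (u $ i) ^ k) \<in> borel_measurable s"
    by (rule borel_measurable_continuous_standardized) (intro continuous_intros)
  ultimately show ?thesis
    by (rule Bochner_Integration.integrable_bound)
      (simp add: power_abs abs_power_le_one_plus_power4[OF k])
qed

lemma integral_coord_power: "k \<le> 4 \<Longrightarrow> expectation (\<lambda>u. (u $ i) ^ k) = coord_moment \<kappa> k"
proof -
  assume "k \<le> 4"
  then have "k = 0 \<or> k = 1 \<or> k = 2 \<or> k = 3 \<or> k = 4" by auto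
  with std show ?thesis
    by (auto simp: standardized_kappa_def coord_moment_def prob_space)
qed

lemma integral_coord_monomial:
  assumes "\<And>i. p i \<le> 4"
  shows "integrable s (\<lambda>u. \<Prod>i\<in>UNIV. (u $ i) ^ p i)"
    and "expectation (\<lambda>u. \<Prod>i\<in>UNIV. (u $ i) ^ p i) = (\<Prod>i\<in>UNIV. coord_moment \<kappa> (p i))"
proof -
  have "indep_vars (\<lambda>_. borel) (\<lambda>i u. u $ i) UNIV"
    using std unfolding standardized_kappa_def by blast
  then have iv: "indep_vars (\<lambda>_. borel) (\<lambda>i u. (u $ i) ^ p i) UNIV"
    by (rule indep_vars_compose2) auto
  show "integrable s (\<lambda>u. \<Prod>i\<in>UNIV. (u $ i) ^ p i)"
    by (rule indep_vars_integrable) (auto intro: iv integrable_coord_power assms)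
  have "expectation (\<lambda>u. \<Prod>i\<in>UNIV. (u $ i) ^ p i) = (\<Prod>i\<in>UNIV. expectation (\<lambda>u. (u $ i) ^ p i))"
    by (rule indep_vars_lebesgue_integral) (auto intro: iv integrable_coord_power assms)
  also have "\<dots> = (\<Prod>i\<in>UNIV. coord_moment \<kappa> (p i))"
    using integral_coord_power assms by simp
  finally show "expectation (\<lambda>u. \<Prod>i\<in>UNIV. (u $ i) ^ p i) = (\<Prod>i\<in>UNIV. coord_moment \<kappa> (p i))" .
qed

lemma integral_coord_triple:
  fixes j l k :: 'n
  assumes "a + b + c \<le> 4"
  defines "e \<equiv> \<lambda>i. (if i = j then a else 0) + (if i = l then b else 0) + (if i = k then c else 0)"
  shows "integrable s (\<lambda>u. (u $ j) ^ a * (u $ l) ^ b * (u $ k) ^ c)"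
    and "expectation (\<lambda>u. (u $ j) ^ a * (u $ l) ^ b * (u $ k) ^ c) = (\<Prod>i\<in>{j, l, k}. coord_moment \<kappa> (e i))"
proof -
  have monomial: "(\<lambda>u. (u $ j) ^ a * (u $ l) ^ b * (u $ k) ^ c) = (\<lambda>u. \<Prod>i\<in>UNIV. (u $ i) ^ e i)"
    unfolding e_def by (simp only: power_add prod.distrib prod_power_if_eq)
  have "e i \<le> 4" for i
    using assms(1) unfolding e_def by auto
  note moments = integral_coord_monomial[of e, OF this]
  show "integrable s (\<lambda>u. (u $ j) ^ a * (u $ l) ^ b * (u $ k) ^ c)"
    unfolding monomial by (fact moments(1))
  have "(\<Prod>i\<in>UNIV. coord_moment \<kappa> (e i)) = (\<Prod>i\<in>{j, l, k}. coord_moment \<kappa> (e i))"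
    by (rule prod.mono_neutral_right) (auto simp: e_def coord_moment_def)
  then show "expectation (\<lambda>u. (u $ j) ^ a * (u $ l) ^ b * (u $ k) ^ c) = (\<Prod>i\<in>{j, l, k}. coord_moment \<kappa> (e i))"
    unfolding monomial moments(2) .
qed

lemma integral_coord:
  "integrable s (\<lambda>u. u $ j)"
  "expectation (\<lambda>u. u $ j) = 0"
  using integrable_coord_power[of 1 j] integral_coord_power[of 1 j]
  by (simp_all add: coord_moment_def)

lemma integral_coord_mult:
  "integrable s (\<lambda>u. u $ j * u $ l)"
  "expectation (\<lambda>u. u $ j * u $ l) = (if j = l then 1 else 0)"
  using integral_coord_triple[of 1 1 0 j l j]
  by (cases "j = l"; auto simp: coord_moment_def)+

lemma integral_coord_mult_sq:
  "integrable s (\<lambda>u. u $ j * (u $ k)\<^sup>2)"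
  "expectation (\<lambda>u. u $ j * (u $ k)\<^sup>2) = 0"
  using integral_coord_triple[of 1 0 2 j j k]
  by (cases "j = k"; auto simp: coord_moment_def)+

lemma integral_coord_mult_mult_sq:
  "integrable s (\<lambda>u. u $ j * u $ l * (u $ k)\<^sup>2)"
  "expectation (\<lambda>u. u $ j * u $ l * (u $ k)\<^sup>2) = (if j = l then if j = k then \<kappa> else 1 else 0)"
  using integral_coord_triple[of 1 1 2 j l k]
  by (cases "j = l"; cases "j = k"; cases "l = k"; auto simp: coord_moment_def insert_commute)+

lemma integral_inner_sq:
  fixes v :: "real^'n"
  shows "integrable s (\<lambda>u. (inner v u)\<^sup>2)"
    and "expectation (\<lambda>u. (inner v u)\<^sup>2) = (norm v)\<^sup>2"
  unfolding power2_inner_vec_eq_sum power2_norm_real_vec_eq_sum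
  by (simp_all add: Bochner_Integration.integral_sum integral_coord_mult power2_eq_square
      if_distrib[of "\<lambda>x. _ * x"] sum.delta cong: if_cong)

lemma integral_norm_sq:
  shows "integrable s (\<lambda>u. (norm u)\<^sup>2)"
    and "expectation (\<lambda>u. (norm u)\<^sup>2) = real CARD('n)"
  using integrable_coord_power[of 2] integral_coord_power[of 2]
  by (simp_all add: power2_norm_real_vec_eq_sum Bochner_Integration.integral_sum coord_moment_def)

lemma integral_inner_mult_one_plus_norm_sq:
  fixes v :: "real^'n"
  shows "integrable s (\<lambda>u. inner v u * (1 + (norm u)\<^sup>2))"
    and "expectation (\<lambda>u. inner v u * (1 + (norm u)\<^sup>2)) = 0"
proof -
  have expand: "(\<lambda>u. inner v u * (1 + (norm u)\<^sup>2)) = (\<lambda>u. (\<Sum>j\<in>UNIV. v $ j * u $ j)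
      + (\<Sum>j\<in>UNIV. \<Sum>k\<in>UNIV. v $ j * (u $ j * (u $ k)\<^sup>2)))"
    by (simp add: inner_vec_def power2_norm_real_vec_eq_sum sum_product algebra_simps)
  show "integrable s (\<lambda>u. inner v u * (1 + (norm u)\<^sup>2))"
    unfolding expand by (simp add: integral_coord integral_coord_mult_sq)
  show "expectation (\<lambda>u. inner v u * (1 + (norm u)\<^sup>2)) = 0"
    unfolding expand
    by (simp add: Bochner_Integration.integral_sum integral_coord integral_coord_mult_sq)
qed

lemma integral_inner_sq_mult_norm_sq:
  fixes v :: "real^'n"
  shows "integrable s (\<lambda>u. (inner v u)\<^sup>2 * (norm u)\<^sup>2)"
    and "expectation (\<lambda>u. (inner v u)\<^sup>2 * (norm u)\<^sup>2) = (real CARD('n) + \<kappa> - 1) * (norm v)\<^sup>2"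
proof -
  have expand: "(\<lambda>u. (inner v u)\<^sup>2 * (norm u)\<^sup>2) =
      (\<lambda>u. \<Sum>j\<in>UNIV. \<Sum>l\<in>UNIV. \<Sum>k\<in>UNIV. v $ j * v $ l * (u $ j * u $ l * (u $ k)\<^sup>2))"
    unfolding power2_inner_vec_eq_sum power2_norm_real_vec_eq_sum
    by (simp add: sum_distrib_left sum_distrib_right mult_ac)
  show "integrable s (\<lambda>u. (inner v u)\<^sup>2 * (norm u)\<^sup>2)"
    unfolding expand by (simp add: integral_coord_mult_mult_sq)
  have card: "(\<Sum>k\<in>UNIV. if j = k then \<kappa> else 1) = real CARD('n) + \<kappa> - 1" for j :: 'n
  proof -
    have "(\<Sum>k\<in>UNIV. if j = k then \<kappa> else 1) = (\<Sum>k\<in>UNIV. 1 + (if j = k then \<kappa> - 1 else 0))"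
      by (intro sum.cong) auto
    then show ?thesis by (simp add: sum.distrib)
  qed
  have "expectation (\<lambda>u. (inner v u)\<^sup>2 * (norm u)\<^sup>2) = (\<Sum>j\<in>UNIV. \<Sum>l\<in>UNIV. \<Sum>k\<in>UNIV.
      v $ j * v $ l * (if j = l then if j = k then \<kappa> else 1 else 0))"
    unfolding expand by (simp add: Bochner_Integration.integral_sum integral_coord_mult_mult_sq)
  also have "\<dots> = (\<Sum>j\<in>UNIV. \<Sum>k\<in>UNIV. (v $ j)\<^sup>2 * (if j = k then \<kappa> else 1))"
    by (rule sum.cong[OF refl], subst sum.swap)
      (simp add: if_distrib[of "\<lambda>x. _ * x"] sum.delta power2_eq_square cong: if_cong)
  also have "\<dots> = (real CARD('n) + \<kappa> - 1) * (norm v)\<^sup>2"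
    by (simp add: power2_norm_real_vec_eq_sum[of v] sum_distrib_left[symmetric] card
        sum_distrib_right[symmetric] mult.commute)
  finally show "expectation (\<lambda>u. (inner v u)\<^sup>2 * (norm u)\<^sup>2) = (real CARD('n) + \<kappa> - 1) * (norm v)\<^sup>2" .
qed

lemma integral_inner_plus_sq_weighted:
  fixes v :: "real^'n"
  shows "integrable s (\<lambda>u. (inner v u + c)\<^sup>2 * (1 + (norm u)\<^sup>2))"
    and "expectation (\<lambda>u. (inner v u + c)\<^sup>2 * (1 + (norm u)\<^sup>2))
      = (real CARD('n) + 1) * c\<^sup>2 + (real CARD('n) + \<kappa>) * (norm v)\<^sup>2"
proof -
  have split: "(\<lambda>u. (inner v u + c)\<^sup>2 * (1 + (norm u)\<^sup>2)) = (\<lambda>u. (inner v u)\<^sup>2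
      + (inner v u)\<^sup>2 * (norm u)\<^sup>2 + 2 * c * (inner v u * (1 + (norm u)\<^sup>2)) + c\<^sup>2 * (1 + (norm u)\<^sup>2))"
    by (simp add: fun_eq_iff power2_eq_square algebra_simps)
  note moments = integral_inner_sq integral_inner_sq_mult_norm_sq
    integral_inner_mult_one_plus_norm_sq integral_norm_sq
  show "integrable s (\<lambda>u. (inner v u + c)\<^sup>2 * (1 + (norm u)\<^sup>2))"
    unfolding split by (simp add: moments)
  show "expectation (\<lambda>u. (inner v u + c)\<^sup>2 * (1 + (norm u)\<^sup>2))
      = (real CARD('n) + 1) * c\<^sup>2 + (real CARD('n) + \<kappa>) * (norm v)\<^sup>2"
    unfolding split by (simp add: moments prob_space) (simp add: algebra_simps)
qed

lemma integral_norm_affine_sq_weighted: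
  fixes a :: "real^'n" and C :: "real^'n^'n"
  shows "integrable s (\<lambda>u. (norm (C *v u + a))\<^sup>2 * (1 + (norm u)\<^sup>2))"
    and "expectation (\<lambda>u. (norm (C *v u + a))\<^sup>2 * (1 + (norm u)\<^sup>2))
      = (real CARD('n) + 1) * (norm a)\<^sup>2 + (real CARD('n) + \<kappa>) * (norm C)\<^sup>2"
proof -
  have rows: "(\<lambda>u. (norm (C *v u + a))\<^sup>2 * (1 + (norm u)\<^sup>2))
      = (\<lambda>u. \<Sum>i\<in>UNIV. (inner (C $ i) u + a $ i)\<^sup>2 * (1 + (norm u)\<^sup>2))"
  proof
    fix u
    have "(norm (C *v u + a))\<^sup>2 = (\<Sum>i\<in>UNIV. (inner (C $ i) u + a $ i)\<^sup>2)"
      by (simp add: power2_norm_real_vec_eq_sum matrix_vector_mult_def inner_vec_def)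
    then show "(norm (C *v u + a))\<^sup>2 * (1 + (norm u)\<^sup>2)
        = (\<Sum>i\<in>UNIV. (inner (C $ i) u + a $ i)\<^sup>2 * (1 + (norm u)\<^sup>2))"
      by (simp add: sum_distrib_right)
  qed
  show "integrable s (\<lambda>u. (norm (C *v u + a))\<^sup>2 * (1 + (norm u)\<^sup>2))"
    unfolding rows by (simp add: integral_inner_plus_sq_weighted)
  show "expectation (\<lambda>u. (norm (C *v u + a))\<^sup>2 * (1 + (norm u)\<^sup>2))
      = (real CARD('n) + 1) * (norm a)\<^sup>2 + (real CARD('n) + \<kappa>) * (norm C)\<^sup>2"
    unfolding rows
    by (simp add: Bochner_Integration.integral_sum integral_inner_plus_sq_weighted
        power2_norm_real_vec_eq_sum[of a] power2_norm_vec_eq_sum[of C] sum.distrib sum_distrib_left)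
qed

lemma nn_integral_norm_affine_sq_weighted:
  fixes a :: "real^'n" and C :: "real^'n^'n"
  shows "(\<integral>\<^sup>+ u. ennreal (M\<^sup>2 * ((norm (C *v u + a))\<^sup>2 * (1 + (norm u)\<^sup>2))) \<partial>s)
    = ennreal (M\<^sup>2 * ((real CARD('n) + 1) * (norm a)\<^sup>2 + (real CARD('n) + \<kappa>) * (norm C)\<^sup>2))"
  by (subst nn_integral_eq_integral)
    (simp_all add: integral_norm_affine_sq_weighted)

lemma nn_integral_norm_grad_comp_T_sq_le:
  fixes f :: "real^'n \<Rightarrow> real"
  assumes "M \<ge> 0" "\<And>z. f differentiable (at z)" "smooth M f" "grad f z0 = 0"
  shows "(\<integral>\<^sup>+ u. ennreal ((norm (grad (\<lambda>w. f (T w u)) (m, C)))\<^sup>2) \<partial>s)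
    \<le> ennreal (M\<^sup>2 * ((real CARD('n) + 1) * (norm (m - z0))\<^sup>2 + (real CARD('n) + \<kappa>) * (norm C)\<^sup>2))"
  unfolding nn_integral_norm_affine_sq_weighted[symmetric]
  by (intro nn_integral_mono ennreal_leI norm_grad_comp_T_sq_le assms)

lemma nn_integral_norm_grad_comp_T_half_sq_dist:
  fixes z0 :: "real^'n"
  assumes "M \<ge> 0"
  shows "(\<integral>\<^sup>+ u. ennreal ((norm (grad (\<lambda>w. M / 2 * (norm (T w u - z0))\<^sup>2) (m, C)))\<^sup>2) \<partial>s)
    = ennreal (M\<^sup>2 * ((real CARD('n) + 1) * (norm (m - z0))\<^sup>2 + (real CARD('n) + \<kappa>) * (norm C)\<^sup>2))"
  unfolding nn_integral_norm_affine_sq_weighted[symmetric] norm_grad_comp_T_half_sq_dist[OF assms] ..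

end

theorem theorem1:
  fixes s :: "(real^'n) measure" and \<kappa> :: real
  assumes "standardized_kappa s \<kappa>"
  shows "(\<forall>(f :: real^'n \<Rightarrow> real) M zbar m C.
            M \<ge> 0 \<and> (\<forall>z. f differentiable (at z)) \<and> smooth M f \<and> grad f zbar = 0 \<longrightarrow>
            (\<integral>\<^sup>+ u. ennreal ((norm (grad (\<lambda>w. f (T w u)) (m, C)))\<^sup>2) \<partial>s)
              \<le> ennreal (M\<^sup>2 * ((real CARD('n) + 1) * (norm (m - zbar))\<^sup>2
                               + (real CARD('n) + \<kappa>) * (norm C)\<^sup>2)))
       \<and> (\<forall>M \<ge> 0. \<forall>zbar :: real^'n.
            let f = (\<lambda>z. M / 2 * (norm (z - zbar))\<^sup>2) in
            (\<forall>z. f differentiable (at z)) \<and> smooth M f \<and> grad f zbar = 0 \<and>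
            (\<forall>m C. (\<integral>\<^sup>+ u. ennreal ((norm (grad (\<lambda>w. f (T w u)) (m, C)))\<^sup>2) \<partial>s)
              = ennreal (M\<^sup>2 * ((real CARD('n) + 1) * (norm (m - zbar))\<^sup>2
                               + (real CARD('n) + \<kappa>) * (norm C)\<^sup>2))))"
proof -
  have "grad (\<lambda>z. M / 2 * (norm (z - zbar))\<^sup>2) zbar = 0" for M :: real and zbar :: "real^'n"
    unfolding grad_half_sq_dist by simp
  then show ?thesis
    unfolding Let_def
    using nn_integral_norm_grad_comp_T_sq_le[OF assms] nn_integral_norm_grad_comp_T_half_sq_dist[OF assms]
      differentiable_half_sq_dist smooth_half_sq_dist
    by blast
qed

end
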